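(* Let $a,b\in\mathbb R$ be such that $\Gamma_{a,b}:y^2=x^3+ax^2+bx$ (projectively $Y^2Z=X^3+aX^2Z+bXZ^2$) is a non-singular cubic. If $A,\bar A,B$ are three points on $\Gamma_{a,b}$ lying on a straight line, then $A\#A=\bar B$.
   Context: On $\Gamma_{a,b}$ one uses the chord-tangent group law with neutral element the inflection point $\mathcal O=(0:1:0)$; $T=(0:0:1)$ is a point of order 2, and the conjugate of a point $P$ is $\bar P:=T+P$. For points $P,Q$ on the curve, $P\#Q$ is the third intersection point (with multiplicity) of the line $PQ$ with the curve, where for $P=Q$ the line is the tangent at $P$; thus $P\#Q=-(P+Q)$, and $A\#A$ is the second intersection of the tangent at $A$ with the curve. *)

theory Defs
  imports "HOL-Computational_Algebra.Polynomial" "HOL-Library.Multiset"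
begin

text \<open>Points of the projective closure of y^2 = x^3 + a x^2 + b x over the reals:
  the affine points (x,y) and the unique point at infinity O = (0:1:0).\<close>
datatype point = Inf | Aff real real

definition cubic_rhs :: "real \<Rightarrow> real \<Rightarrow> real \<Rightarrow> real" where
  "cubic_rhs a b x = x^3 + a * x^2 + b * x"

fun on_curve :: "real \<Rightarrow> real \<Rightarrow> point \<Rightarrow> bool" where
  "on_curve a b Inf = True"
| "on_curve a b (Aff x y) = (y^2 = cubic_rhs a b x)"

text \<open>Non-singularity: no affine singular point (the point at infinity is always smooth).\<close>
definition nonsingular :: "real \<Rightarrow> real \<Rightarrow> bool" where
  "nonsingular a b \<longleftrightarrow> (\<forall>x y. y^2 = cubic_rhs a b x \<longrightarrow>
       (2 * y \<noteq> 0 \<or> 3 * x^2 + 2 * a * x + b \<noteq> 0))"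

text \<open>Projective lines: Y = mX + cZ (non-vertical), X = x0 Z (vertical), Z = 0 (line at infinity).\<close>
datatype line = NonVert real real | Vert real | LInf

text \<open>Intersection multiplicity of a line with the curve at a point (0 if the point is not
  on both). For a non-vertical line it is the multiplicity of x as root of
  x^3+ax^2+bx-(mx+c)^2; for a vertical line x = x0 it is the multiplicity of y as root of
  y^2 - (x0^3+a x0^2+b x0) at affine points and 1 at O; the line at infinity meets the
  curve only at the inflection point O, with multiplicity 3.\<close>
fun imult :: "real \<Rightarrow> real \<Rightarrow> line \<Rightarrow> point \<Rightarrow> nat" where
  "imult a b (NonVert m c) (Aff x y) =
     (if y = m * x + c then order x [: - (c^2), b - 2 * m * c, a - m^2, 1 :] else 0)"
| "imult a b (NonVert m c) Inf = 0"
| "imult a b (Vert x0) (Aff x y) =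
     (if x = x0 then order y [: - cubic_rhs a b x0, 0, 1 :] else 0)"
| "imult a b (Vert x0) Inf = 1"
| "imult a b LInf (Aff x y) = 0"
| "imult a b LInf Inf = 3"

text \<open>P # Q: the third intersection point (with multiplicity) of the line PQ (the tangent
  at P if P = Q) with the curve, i.e. the point R such that some line meets the curve
  exactly in P, Q, R counted with multiplicity.\<close>
definition sharp :: "real \<Rightarrow> real \<Rightarrow> point \<Rightarrow> point \<Rightarrow> point" where
  "sharp a b P Q = (THE R. \<exists>L. \<forall>X. imult a b L X = count {#P, Q, R#} X)"

definition cadd :: "real \<Rightarrow> real \<Rightarrow> point \<Rightarrow> point \<Rightarrow> point" where
  "cadd a b P Q = sharp a b Inf (sharp a b P Q)"

definition T_pt :: point where "T_pt = Aff 0 0"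

definition conj_pt :: "real \<Rightarrow> real \<Rightarrow> point \<Rightarrow> point" where
  "conj_pt a b P = cadd a b T_pt P"

end

theory Submission
  imports Defs
begin

text \<open>
  Write A' = T + A for the conjugate. In the group law A # A' = -(A + T + A), so
  B' = T + B = -2A = A # A because 2T = O. Associativity of the chord-tangent law is not at
  hand, so we compute instead. On a nonsingular cubic there is only one line through two
  given points (the tangent if they coincide), hence P # Q is determined by exhibiting a
  single line, and away from O and T conjugation is (x, y) \<mapsto> (b/x, -by/x^2). The special
  positions of A (A = O, A = T, A of order two, A and A' on a vertical line) are checked
  directly; in the generic case the chord through A and A' and the tangent at A are
  explicit, and the claim becomes a rational identity once a is eliminated through the
  curve equation.
\<close>

section \<open>Intersection multiplicities\<close>

lemma order_linear_factor: "order x [:-r, 1:] = (if x = r then 1 else 0)"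
  for x r :: "'a::idom"
  using order_power_n_n[of r 1] by (simp add: order_0I)

lemma order_prod_linear_factors: "order x (\<Prod>r\<in>#R. [:-r, 1:]) = count R x"
  for x :: "'a::idom"
proof (induction R)
  case (add r R)
  have "(\<Prod>r\<in>#R. [:-r, 1:]) \<noteq> 0"
    by (auto simp: prod_mset_zero_iff)
  then have "order x ([:-r, 1:] * (\<Prod>r\<in>#R. [:-r, 1:]))
      = order x [:-r, 1:] + order x (\<Prod>r\<in>#R. [:-r, 1:])"
    by (intro order_mult no_zero_divisors) simp_all
  with add show ?case
    by (simp add: order_linear_factor)
qed simp

lemma poly_pderiv_eq_0_if_order_ge_2:
  fixes p :: "'a::{idom,semiring_char_0} poly"
  assumes "p \<noteq> 0" and "2 \<le> order x p"
  shows "poly (pderiv p) x = 0"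
proof -
  have "poly p x = 0"
    using assms by (simp add: order_root)
  with assms have "order x p = Suc (order x (pderiv p))"
    by (simp add: order_pderiv)
  with assms show ?thesis
    by (simp add: order_root)
qed

abbreviation cubic_rhs_deriv :: "real \<Rightarrow> real \<Rightarrow> real \<Rightarrow> real" where
  "cubic_rhs_deriv a b x \<equiv> 3 * x^2 + 2 * a * x + b"

lemma nonsingularD:
  "nonsingular a b \<Longrightarrow> y^2 = cubic_rhs a b x \<Longrightarrow> y = 0
    \<Longrightarrow> cubic_rhs_deriv a b x \<noteq> 0"
  unfolding nonsingular_def by auto

lemma nonsingular_b_nonzero: "nonsingular a b \<Longrightarrow> b \<noteq> 0"
  using nonsingularD[of a b 0 0] by (simp add: cubic_rhs_def)

lemma poly_NonVert_cubic:
  "poly [: - (c^2), b - 2 * m * c, a - m^2, 1 :] x = cubic_rhs a b x - (m * x + c)^2"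
  by (simp add: cubic_rhs_def algebra_simps power2_eq_square power3_eq_cube)

lemma poly_pderiv_NonVert_cubic:
  "poly (pderiv [: - (c^2), b - 2 * m * c, a - m^2, 1 :]) x
     = cubic_rhs_deriv a b x - 2 * m * (m * x + c)"
  by (simp add: pderiv_pCons algebra_simps power2_eq_square)

lemma imult_NonVert_pos:
  assumes "0 < imult a b (NonVert m c) (Aff x y)"
  shows "y = m * x + c" and "y^2 = cubic_rhs a b x"
proof -
  show y: "y = m * x + c"
    using assms by (simp split: if_splits)
  have "0 < order x [: - (c^2), b - 2 * m * c, a - m^2, 1 :]"
    using assms y by simp
  then have "poly [: - (c^2), b - 2 * m * c, a - m^2, 1 :] x = 0"
    by (simp add: order_gt_0_iff)
  with y show "y^2 = cubic_rhs a b x"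
    unfolding poly_NonVert_cubic by simp
qed

lemma imult_NonVert_ge_2:
  assumes "2 \<le> imult a b (NonVert m c) (Aff x y)"
  shows "2 * m * y = cubic_rhs_deriv a b x"
proof -
  have y: "y = m * x + c"
    using assms by (simp split: if_splits)
  have "poly (pderiv [: - (c^2), b - 2 * m * c, a - m^2, 1 :]) x = 0"
    by (rule poly_pderiv_eq_0_if_order_ge_2) (use assms y in simp_all)
  with y show ?thesis
    unfolding poly_pderiv_NonVert_cubic by simp
qed

lemma imult_Vert_pos:
  assumes "0 < imult a b (Vert x0) (Aff x y)"
  shows "x = x0" and "y^2 = cubic_rhs a b x"
proof -
  show x: "x = x0"
    using assms by (simp split: if_splits)
  have "0 < order y [: - cubic_rhs a b x0, 0, 1 :]"
    using assms x by simp
  then have "poly [: - cubic_rhs a b x0, 0, 1 :] y = 0"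
    by (simp add: order_gt_0_iff)
  with x show "y^2 = cubic_rhs a b x"
    by (simp add: power2_eq_square)
qed

lemma imult_Vert_ge_2:
  assumes "2 \<le> imult a b (Vert x0) (Aff x y)"
  shows "y = 0"
proof -
  have "poly (pderiv [: - cubic_rhs a b x0, 0, 1 :]) y = 0"
    by (rule poly_pderiv_eq_0_if_order_ge_2) (use assms in \<open>simp_all split: if_splits\<close>)
  then show ?thesis
    by (simp add: pderiv_pCons)
qed

lemma on_curve_if_imult_pos:
  assumes "0 < imult a b L P"
  shows "on_curve a b P"
proof (cases P)
  case (Aff x y)
  show ?thesis
  proof (cases L)
    case (NonVert m c)
    with assms Aff show ?thesis
      using imult_NonVert_pos(2)[of a b m c x y] by simp
  next
    case (Vert x0)
    with assms Aff show ?thesis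
      using imult_Vert_pos(2)[of a b x0 x y] by simp
  qed (use assms Aff in simp)
qed simp

section \<open>The third intersection point\<close>

fun line_through :: "real \<Rightarrow> real \<Rightarrow> point \<Rightarrow> point \<Rightarrow> line" where
  "line_through a b Inf Inf = LInf"
| "line_through a b Inf (Aff x y) = Vert x"
| "line_through a b (Aff x y) Inf = Vert x"
| "line_through a b (Aff x1 y1) (Aff x2 y2) =
     (if x1 \<noteq> x2 then let m = (y2 - y1) / (x2 - x1) in NonVert m (y1 - m * x1)
      else if y1 = y2 \<and> y1 \<noteq> 0 then
        let m = cubic_rhs_deriv a b x1 / (2 * y1) in NonVert m (y1 - m * x1)
      else Vert x1)"

definition passes_through :: "real \<Rightarrow> real \<Rightarrow> line \<Rightarrow> point \<Rightarrow> point \<Rightarrow> bool" where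
  "passes_through a b L P Q \<longleftrightarrow> (\<forall>X. count {#P, Q#} X \<le> imult a b L X)"

lemma passes_through_commute: "passes_through a b L P Q = passes_through a b L Q P"
  by (simp add: passes_through_def add_mset_commute)

lemma passes_throughD:
  assumes "passes_through a b L P Q"
  shows "0 < imult a b L P" and "0 < imult a b L Q" and "P = Q \<Longrightarrow> 2 \<le> imult a b L P"
proof -
  have P: "count {#P, Q#} P \<le> imult a b L P" and Q: "count {#P, Q#} Q \<le> imult a b L Q"
    using assms unfolding passes_through_def by blast+
  moreover have "1 \<le> count {#P, Q#} P" and "1 \<le> count {#P, Q#} Q"
    by simp_all
  ultimately show "0 < imult a b L P" and "0 < imult a b L Q"
    by linarith+
  show "2 \<le> imult a b L P" if "P = Q"
    using P that by simp
qed

lemma passes_through_Inf_Aff: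
  assumes "passes_through a b L Inf (Aff x y)"
  shows "L = Vert x"
proof (cases L)
  case (NonVert m c)
  with passes_throughD(1)[OF assms] show ?thesis
    by simp
next
  case (Vert x0)
  with passes_throughD(2)[OF assms] have "x = x0"
    using imult_Vert_pos(1) by blast
  with Vert show ?thesis
    by simp
next
  case LInf
  with passes_throughD(2)[OF assms] show ?thesis
    by simp
qed

lemma passes_through_NonVert:
  assumes ns: "nonsingular a b"
    and through: "passes_through a b (NonVert m c) (Aff x1 y1) (Aff x2 y2)"
  shows "NonVert m c = line_through a b (Aff x1 y1) (Aff x2 y2)"
proof -
  note y1 = imult_NonVert_pos[OF passes_throughD(1)[OF through]]
  note y2 = imult_NonVert_pos(1)[OF passes_throughD(2)[OF through]]
  have c: "c = y1 - m * x1"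
    using y1(1) by simp
  show ?thesis
  proof (cases "x1 = x2")
    case False
    then have "m = (y2 - y1) / (x2 - x1)"
      using y1 y2 by (simp add: field_simps)
    with False c show ?thesis
      by (simp add: Let_def)
  next
    case True
    with y1 y2 have "y2 = y1"
      by simp
    with True have "2 \<le> imult a b (NonVert m c) (Aff x1 y1)"
      using passes_throughD(3)[OF through] by simp
    then have "2 * m * y1 = cubic_rhs_deriv a b x1"
      by (rule imult_NonVert_ge_2)
    moreover from this have "y1 \<noteq> 0"
      using nonsingularD[OF ns y1(2)] by auto
    ultimately have "m = cubic_rhs_deriv a b x1 / (2 * y1)"
      by (simp add: field_simps)
    with True c \<open>y2 = y1\<close> \<open>y1 \<noteq> 0\<close> show ?thesis
      by (simp add: Let_def)
  qed
qed

lemma passes_through_Vert: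
  assumes through: "passes_through a b (Vert x0) (Aff x1 y1) (Aff x2 y2)"
  shows "Vert x0 = line_through a b (Aff x1 y1) (Aff x2 y2)"
proof -
  have "x1 = x0" and "x2 = x0"
    using imult_Vert_pos(1) passes_throughD(1,2)[OF through] by blast+
  moreover have "y1 = 0" if "y1 = y2"
  proof -
    from that \<open>x1 = x0\<close> \<open>x2 = x0\<close> have "2 \<le> imult a b (Vert x0) (Aff x1 y1)"
      using passes_throughD(3)[OF through] by simp
    then show ?thesis
      by (rule imult_Vert_ge_2)
  qed
  ultimately show ?thesis
    by simp
qed

lemma line_through_unique:
  assumes ns: "nonsingular a b" and through: "passes_through a b L P Q"
  shows "L = line_through a b P Q"
proof (cases P; cases Q)
  show ?thesis if "P = Inf" "Q = Inf"
    using passes_throughD(3)[OF through] that by (cases L) simp_all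
  show ?thesis if "P = Inf" "Q = Aff x y" for x y
    using passes_through_Inf_Aff through that by simp
  show ?thesis if "P = Aff x y" "Q = Inf" for x y
    using passes_through_Inf_Aff through that by (simp add: passes_through_commute)
  show ?thesis if "P = Aff x1 y1" "Q = Aff x2 y2" for x1 y1 x2 y2
  proof (cases L)
    case LInf
    with passes_throughD(1)[OF through] that show ?thesis
      by simp
  qed (use passes_through_NonVert[OF ns] passes_through_Vert through that in simp_all)
qed

definition collinear_triple :: "real \<Rightarrow> real \<Rightarrow> point \<Rightarrow> point \<Rightarrow> point \<Rightarrow> bool" where
  "collinear_triple a b P Q R \<longleftrightarrow> (\<exists>L. \<forall>X. imult a b L X = count {#P, Q, R#} X)"

lemma collinear_triple_unique:
  assumes ns: "nonsingular a b"
    and "collinear_triple a b P Q R" and "collinear_triple a b P Q R'"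
  shows "R = R'"
proof -
  obtain L L' where L: "\<forall>X. imult a b L X = count {#P, Q, R#} X"
    and L': "\<forall>X. imult a b L' X = count {#P, Q, R'#} X"
    using assms(2,3) unfolding collinear_triple_def by blast
  have "passes_through a b L P Q" and "passes_through a b L' P Q"
    using L L' by (simp_all add: passes_through_def)
  then have "L = line_through a b P Q" and "L' = line_through a b P Q"
    by (simp_all add: line_through_unique[OF ns])
  with L L' have "{#P, Q, R#} = {#P, Q, R'#}"
    by (simp add: multiset_eq_iff)
  then show ?thesis
    by simp
qed

lemma sharp_eqI:
  assumes "nonsingular a b" and "collinear_triple a b P Q R"
  shows "sharp a b P Q = R"
proof -
  have "(THE R. collinear_triple a b P Q R) = R"
    using assms collinear_triple_unique by blast
  then show ?thesis
    by (simp add: sharp_def collinear_triple_def)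
qed

lemma collinear_triple_permute:
  "collinear_triple a b P Q R \<Longrightarrow> {#P, Q, R#} = {#P', Q', R'#}
    \<Longrightarrow> collinear_triple a b P' Q' R'"
  by (simp add: collinear_triple_def)

lemma on_curve_if_collinear_triple:
  assumes "collinear_triple a b P Q R"
  shows "on_curve a b R"
proof -
  obtain L where "\<forall>X. imult a b L X = count {#P, Q, R#} X"
    using assms unfolding collinear_triple_def by blast
  then have "0 < imult a b L R"
    by simp
  then show ?thesis
    by (rule on_curve_if_imult_pos)
qed

lemma collinear_triple_LInf: "collinear_triple a b Inf Inf Inf"
proof -
  have "imult a b LInf X = count {#Inf, Inf, Inf#} X" for X
    by (cases X) simp_all
  then show ?thesis
    unfolding collinear_triple_def by blast
qed

lemma collinear_triple_Vert:
  assumes "y^2 = cubic_rhs a b x"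
  shows "collinear_triple a b Inf (Aff x y) (Aff x (-y))"
proof -
  have "[: - cubic_rhs a b x, 0, 1 :] = (\<Prod>r\<in>#{#y, -y#}. [:-r, 1:])"
    using assms by (simp add: power2_eq_square)
  then have "order v [: - cubic_rhs a b x, 0, 1 :] = count {#y, -y#} v" for v
    by (simp only: order_prod_linear_factors)
  then have "imult a b (Vert x) X = count {#Inf, Aff x y, Aff x (-y)#} X" for X
    by (cases X) auto
  then show ?thesis
    unfolding collinear_triple_def by blast
qed

lemma collinear_triple_NonVert:
  assumes "x1 + x2 + x3 = m^2 - a" and "x1 * x2 + x1 * x3 + x2 * x3 = b - 2 * m * c"
    and "x1 * x2 * x3 = c^2"
    and y1: "y1 = m * x1 + c" and y2: "y2 = m * x2 + c" and y3: "y3 = m * x3 + c"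
  shows "collinear_triple a b (Aff x1 y1) (Aff x2 y2) (Aff x3 y3)"
proof -
  have "[: - (c^2), b - 2 * m * c, a - m^2, 1 :] = (\<Prod>r\<in>#{#x1, x2, x3#}. [:-r, 1:])"
    using assms(1-3) by (simp add: algebra_simps)
  then have order: "order x [: - (c^2), b - 2 * m * c, a - m^2, 1 :] = count {#x1, x2, x3#} x" for x
    by (simp only: order_prod_linear_factors)
  have "imult a b (NonVert m c) X = count {#Aff x1 y1, Aff x2 y2, Aff x3 y3#} X" for X
  proof (cases X)
    case (Aff x y)
    then show ?thesis
      using order y1 y2 y3 by auto
  qed simp
  then show ?thesis
    unfolding collinear_triple_def by blast
qed

lemma collinear_triple_chord:
  assumes P: "y1^2 = cubic_rhs a b x1" and Q: "y2^2 = cubic_rhs a b x2" and "x1 \<noteq> x2"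
    and slope: "m * (x2 - x1) = y2 - y1" and c: "c = y1 - m * x1" and x3: "x3 = m^2 - a - x1 - x2"
  shows "collinear_triple a b (Aff x1 y1) (Aff x2 y2) (Aff x3 (m * x3 + c))"
proof (rule collinear_triple_NonVert)
  have y1: "y1 = m * x1 + c" and y2: "y2 = m * x2 + c"
    using c slope by (simp_all add: algebra_simps)
  define q where "q = b - 2 * m * c"
  have root: "t^3 + (a - m^2) * t^2 + q * t = c^2" if "(m * t + c)^2 = cubic_rhs a b t" for t
    using that unfolding q_def cubic_rhs_def by (simp add: algebra_simps power2_eq_square)
  have "(x1 - x2) * (x1^2 + x1 * x2 + x2^2 + (a - m^2) * (x1 + x2) + q)
      = (x1^3 + (a - m^2) * x1^2 + q * x1) - (x2^3 + (a - m^2) * x2^2 + q * x2)"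
    by (simp add: algebra_simps power2_eq_square power3_eq_cube)
  also have "\<dots> = 0"
    using root[of x1] root[of x2] P Q y1 y2 by simp
  finally have q: "q = - (x1^2 + x1 * x2 + x2^2) - (a - m^2) * (x1 + x2)"
    using \<open>x1 \<noteq> x2\<close> by simp
  show "x1 + x2 + x3 = m^2 - a"
    using x3 by simp
  show "x1 * x2 + x1 * x3 + x2 * x3 = b - 2 * m * c"
    unfolding q_def[symmetric] q x3 by (simp add: algebra_simps power2_eq_square)
  have "c^2 = x1^3 + (a - m^2) * x1^2 + q * x1"
    using root[of x1] P y1 by simp
  also have "\<dots> = x1 * x2 * x3"
    unfolding q x3 by (simp add: algebra_simps power2_eq_square power3_eq_cube)
  finally show "x1 * x2 * x3 = c^2"
    by simp
qed (use c slope in \<open>simp_all add: algebra_simps\<close>)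

lemma collinear_triple_tangent:
  assumes P: "y^2 = cubic_rhs a b x" and slope: "2 * m * y = cubic_rhs_deriv a b x"
    and c: "c = y - m * x" and x3: "x3 = m^2 - a - 2 * x"
  shows "collinear_triple a b (Aff x y) (Aff x y) (Aff x3 (m * x3 + c))"
proof (rule collinear_triple_NonVert)
  show "x + x + x3 = m^2 - a"
    using x3 by simp
  have "2 * m * c = 2 * m * y - 2 * m^2 * x"
    unfolding c by (simp add: algebra_simps power2_eq_square)
  then show "x * x + x * x3 + x * x3 = b - 2 * m * c"
    unfolding slope x3 by (simp add: algebra_simps power2_eq_square)
  have "c^2 = y^2 - x * (2 * m * y) + m^2 * x^2"
    unfolding c by (simp add: algebra_simps power2_eq_square)
  also have "\<dots> = x * x * x3"
    unfolding P slope x3 by (simp add: cubic_rhs_def algebra_simps power2_eq_square power3_eq_cube)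
  finally show "x * x * x3 = c^2"
    by simp
qed (use c in simp_all)

section \<open>Conjugation\<close>

lemma sharp_Inf_Inf: "nonsingular a b \<Longrightarrow> sharp a b Inf Inf = Inf"
  by (simp add: sharp_eqI collinear_triple_LInf)

lemma sharp_Inf_Aff:
  "nonsingular a b \<Longrightarrow> y^2 = cubic_rhs a b x \<Longrightarrow> sharp a b Inf (Aff x y) = Aff x (-y)"
  by (simp add: sharp_eqI collinear_triple_Vert)

lemma collinear_triple_T_Inf_T: "collinear_triple a b T_pt Inf T_pt"
  unfolding T_pt_def
  by (rule collinear_triple_permute[OF collinear_triple_Vert[of 0 a b 0]])
    (simp_all add: cubic_rhs_def)

lemma collinear_triple_T_T_Inf: "collinear_triple a b T_pt T_pt Inf"
  by (rule collinear_triple_permute[OF collinear_triple_T_Inf_T]) (simp add: add_mset_commute)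

lemma conj_pt_Inf: "nonsingular a b \<Longrightarrow> conj_pt a b Inf = T_pt"
  unfolding conj_pt_def cadd_def
  using sharp_eqI[OF _ collinear_triple_T_Inf_T] sharp_Inf_Aff[of a b 0 0]
  by (simp add: T_pt_def cubic_rhs_def)

lemma conj_pt_T: "nonsingular a b \<Longrightarrow> conj_pt a b T_pt = Inf"
  unfolding conj_pt_def cadd_def
  by (simp add: sharp_eqI[OF _ collinear_triple_T_T_Inf] sharp_Inf_Inf)

lemma conj_pt_Aff:
  assumes ns: "nonsingular a b" and P: "y^2 = cubic_rhs a b x" and "x \<noteq> 0"
  shows "conj_pt a b (Aff x y) = Aff (b / x) (- (b * y / x^2))"
proof -
  have "(y / x)^2 - a - 0 - x = b / x"
    using P \<open>x \<noteq> 0\<close>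
    by (simp add: cubic_rhs_def field_simps power2_eq_square power3_eq_cube)
  then have "collinear_triple a b (Aff 0 0) (Aff x y) (Aff (b / x) (y / x * (b / x) + 0))"
    using P \<open>x \<noteq> 0\<close> by (intro collinear_triple_chord) (simp_all add: cubic_rhs_def)
  moreover have "y / x * (b / x) = b * y / x^2"
    by (simp add: power2_eq_square)
  ultimately have TP: "collinear_triple a b T_pt (Aff x y) (Aff (b / x) (b * y / x^2))"
    by (simp add: T_pt_def)
  have "on_curve a b (Aff (b / x) (b * y / x^2))"
    using TP by (rule on_curve_if_collinear_triple)
  then show ?thesis
    unfolding conj_pt_def cadd_def by (simp add: sharp_eqI[OF ns TP] sharp_Inf_Aff[OF ns])
qed

section \<open>The tangent at A and the conjugate of B\<close>

lemma sharp_self_eq_conj_Inf: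
  assumes ns: "nonsingular a b" and line: "collinear_triple a b Inf (conj_pt a b Inf) B"
  shows "sharp a b Inf Inf = conj_pt a b B"
proof -
  have "collinear_triple a b Inf T_pt T_pt"
    by (rule collinear_triple_permute[OF collinear_triple_T_Inf_T]) (simp add: add_mset_commute)
  with line have "B = T_pt"
    using collinear_triple_unique[OF ns] conj_pt_Inf[OF ns] by metis
  then show ?thesis
    by (simp add: sharp_Inf_Inf[OF ns] conj_pt_T[OF ns])
qed

lemma sharp_self_eq_conj_T:
  assumes ns: "nonsingular a b" and line: "collinear_triple a b T_pt (conj_pt a b T_pt) B"
  shows "sharp a b T_pt T_pt = conj_pt a b B"
proof -
  from line have "B = T_pt"
    using collinear_triple_unique[OF ns] collinear_triple_T_Inf_T conj_pt_T[OF ns] by metis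
  then show ?thesis
    by (simp add: sharp_eqI[OF ns collinear_triple_T_T_Inf] conj_pt_T[OF ns])
qed

lemma sharp_self_eq_conj_vertical_chord:
  assumes ns: "nonsingular a b" and P: "y^2 = cubic_rhs a b x" and "x \<noteq> 0" and b: "b = x^2"
    and line: "collinear_triple a b (Aff x y) (conj_pt a b (Aff x y)) B"
  shows "sharp a b (Aff x y) (Aff x y) = conj_pt a b B"
proof -
  have y2: "y^2 = x * (2 * x^2 + a * x)"
    using P b by (simp add: cubic_rhs_def algebra_simps power2_eq_square power3_eq_cube)
  have "y \<noteq> 0"
  proof
    assume "y = 0"
    with y2 \<open>x \<noteq> 0\<close> have "a * x = - 2 * x^2"
      by simp
    with nonsingularD[OF ns P \<open>y = 0\<close>] b show False
      by (simp add: algebra_simps)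
  qed
  have "conj_pt a b (Aff x y) = Aff x (-y)"
    using conj_pt_Aff[OF ns P \<open>x \<noteq> 0\<close>] b \<open>x \<noteq> 0\<close> by (simp add: power2_eq_square)
  moreover have "collinear_triple a b (Aff x y) (Aff x (-y)) Inf"
    by (rule collinear_triple_permute[OF collinear_triple_Vert[OF P]]) (simp add: add_mset_commute)
  ultimately have "B = Inf"
    using line collinear_triple_unique[OF ns] by metis
  have "collinear_triple a b (Aff x y) (Aff x y) (Aff 0 (y / x * 0 + 0))"
  proof (rule collinear_triple_tangent[OF P])
    show "2 * (y / x) * y = cubic_rhs_deriv a b x"
      using y2 b \<open>x \<noteq> 0\<close> by (simp add: field_simps power2_eq_square)
    show "0 = (y / x)^2 - a - 2 * x"
      using y2 \<open>x \<noteq> 0\<close> by (simp add: field_simps power2_eq_square)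
  qed (use \<open>x \<noteq> 0\<close> in simp)
  then have "sharp a b (Aff x y) (Aff x y) = T_pt"
    by (simp add: sharp_eqI[OF ns] T_pt_def)
  with \<open>B = Inf\<close> show ?thesis
    by (simp add: conj_pt_Inf[OF ns])
qed

lemma sharp_self_eq_conj_two_torsion:
  assumes ns: "nonsingular a b" and P: "cubic_rhs a b x = 0" and "x \<noteq> 0" and "b \<noteq> x^2"
    and line: "collinear_triple a b (Aff x 0) (conj_pt a b (Aff x 0)) B"
  shows "sharp a b (Aff x 0) (Aff x 0) = conj_pt a b B"
proof -
  have P': "0^2 = cubic_rhs a b x"
    using P by simp
  have "x * (x^2 + a * x + b) = 0"
    using P by (simp add: cubic_rhs_def algebra_simps power2_eq_square power3_eq_cube)
  with \<open>x \<noteq> 0\<close> have g: "x^2 + a * x + b = 0"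
    by simp
  have "cubic_rhs a b (b / x) = b^2 / x^3 * (x^2 + a * x + b)"
    using \<open>x \<noteq> 0\<close> by (simp add: cubic_rhs_def field_simps power2_eq_square power3_eq_cube)
  with g have P_conj: "0^2 = cubic_rhs a b (b / x)"
    by simp
  have "0 = 0^2 - a - x - b / x"
    using g \<open>x \<noteq> 0\<close> by (simp add: field_simps power2_eq_square)
  moreover have "x \<noteq> b / x"
    using \<open>x \<noteq> 0\<close> \<open>b \<noteq> x^2\<close> by (auto simp: field_simps power2_eq_square)
  ultimately have "collinear_triple a b (Aff x 0) (Aff (b / x) 0) (Aff 0 (0 * 0 + 0))"
    using P' P_conj by (intro collinear_triple_chord) simp_all
  moreover have "conj_pt a b (Aff x 0) = Aff (b / x) 0"
    using conj_pt_Aff[OF ns P' \<open>x \<noteq> 0\<close>] by simp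
  ultimately have "B = T_pt"
    using line collinear_triple_unique[OF ns] by (fastforce simp: T_pt_def)
  have "collinear_triple a b (Aff x 0) (Aff x 0) Inf"
    by (rule collinear_triple_permute[OF collinear_triple_Vert[OF P']]) (simp add: add_mset_commute)
  with \<open>B = T_pt\<close> show ?thesis
    by (simp add: sharp_eqI[OF ns] conj_pt_T[OF ns])
qed

lemma chord_conj_tangent_identities:
  fixes a b x y m c m' c' :: real
  assumes "x \<noteq> 0" and "y \<noteq> 0" and "b \<noteq> 0" and "b \<noteq> x^2" and P: "y^2 = cubic_rhs a b x"
    and chord: "m * (b / x - x) = - (b * y / x^2) - y" and c: "c = y - m * x"
    and tangent: "2 * m' * y = cubic_rhs_deriv a b x" and c': "c' = y - m' * x"
  defines "x3 \<equiv> m^2 - a - x - b / x" and "x4 \<equiv> m'^2 - a - 2 * x"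
  shows "x3 \<noteq> 0" and "x4 = b / x3" and "m' * x4 + c' = - (b * (m * x3 + c) / x3^2)"
proof -
  define s where "s = b - x^2"
  have b: "b = x^2 + s" and "s \<noteq> 0"
    using \<open>b \<noteq> x^2\<close> by (simp_all add: s_def)
  \<comment> \<open>With a eliminated, all identities below are rational identities in x, y and s.\<close>
  have a: "a = (y^2 - x^3 - b * x) / x^2"
    using P \<open>x \<noteq> 0\<close> by (simp add: cubic_rhs_def field_simps power2_eq_square power3_eq_cube)
  have m: "m = - y * (b + x^2) / (x * s)"
    using chord \<open>x \<noteq> 0\<close> \<open>s \<noteq> 0\<close> unfolding b by (simp add: field_simps power2_eq_square)
  have m': "m' = cubic_rhs_deriv a b x / (2 * y)"
    using tangent \<open>y \<noteq> 0\<close> by (simp add: field_simps)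
  have x3: "x3 = 4 * b * y^2 / s^2"
    unfolding x3_def m a b using \<open>x \<noteq> 0\<close> \<open>y \<noteq> 0\<close> \<open>s \<noteq> 0\<close>
    by (simp add: field_simps power2_eq_square power3_eq_cube)
  have x4: "x4 = s^2 / (4 * y^2)"
    unfolding x4_def m' a b using \<open>x \<noteq> 0\<close> \<open>y \<noteq> 0\<close> \<open>s \<noteq> 0\<close>
    by (simp add: field_simps power2_eq_square power3_eq_cube)
  show "x3 \<noteq> 0"
    unfolding x3 using \<open>b \<noteq> 0\<close> \<open>y \<noteq> 0\<close> \<open>s \<noteq> 0\<close> by simp
  show "x4 = b / x3"
    unfolding x3 x4 using \<open>b \<noteq> 0\<close> \<open>y \<noteq> 0\<close> \<open>s \<noteq> 0\<close>
    by (simp add: field_simps power2_eq_square)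
  have "(m' * x4 + c') * x3^2 = - (b * (m * x3 + c))"
    unfolding x3 x4 c' c m' m a b using \<open>x \<noteq> 0\<close> \<open>y \<noteq> 0\<close> \<open>s \<noteq> 0\<close>
    by (simp add: field_simps power2_eq_square power3_eq_cube)
  with \<open>x3 \<noteq> 0\<close> show "m' * x4 + c' = - (b * (m * x3 + c) / x3^2)"
    by (simp add: field_simps)
qed

lemma sharp_self_eq_conj_generic:
  assumes ns: "nonsingular a b" and P: "y^2 = cubic_rhs a b x"
    and "x \<noteq> 0" and "b \<noteq> x^2" and "y \<noteq> 0"
    and line: "collinear_triple a b (Aff x y) (conj_pt a b (Aff x y)) B"
  shows "sharp a b (Aff x y) (Aff x y) = conj_pt a b B"
proof -
  define m where "m = - y * (b + x^2) / (x * (b - x^2))"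
  define m' where "m' = cubic_rhs_deriv a b x / (2 * y)"
  define x3 where "x3 = m^2 - a - x - b / x"
  define x4 where "x4 = m'^2 - a - 2 * x"
  have chord: "m * (b / x - x) = - (b * y / x^2) - y"
    using \<open>x \<noteq> 0\<close> \<open>b \<noteq> x^2\<close> unfolding m_def by (simp add: field_simps power2_eq_square)
  have tangent: "2 * m' * y = cubic_rhs_deriv a b x"
    using \<open>y \<noteq> 0\<close> unfolding m'_def by simp
  note identities = chord_conj_tangent_identities[OF \<open>x \<noteq> 0\<close> \<open>y \<noteq> 0\<close>
      nonsingular_b_nonzero[OF ns] \<open>b \<noteq> x^2\<close> P chord refl tangent refl, folded x3_def x4_def]
  have conj_A: "conj_pt a b (Aff x y) = Aff (b / x) (- (b * y / x^2))"
    by (rule conj_pt_Aff[OF ns P \<open>x \<noteq> 0\<close>])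
  have "collinear_triple a b (Aff x y) B (Aff (b / x) (- (b * y / x^2)))"
    using collinear_triple_permute[OF line] conj_A by (simp add: add_mset_commute)
  then have "(- (b * y / x^2))^2 = cubic_rhs a b (b / x)"
    using on_curve_if_collinear_triple by fastforce
  moreover have "x \<noteq> b / x"
    using \<open>x \<noteq> 0\<close> \<open>b \<noteq> x^2\<close> by (auto simp: field_simps power2_eq_square)
  ultimately have "collinear_triple a b (Aff x y) (Aff (b / x) (- (b * y / x^2)))
      (Aff x3 (m * x3 + (y - m * x)))"
    using P chord by (intro collinear_triple_chord) (simp_all add: x3_def)
  then have B: "B = Aff x3 (m * x3 + (y - m * x))"
    using line conj_A collinear_triple_unique[OF ns] by metis
  have "collinear_triple a b (Aff x y) (Aff x y) (Aff x4 (m' * x4 + (y - m' * x)))"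
    using P tangent by (intro collinear_triple_tangent) (simp_all add: x4_def)
  then have "sharp a b (Aff x y) (Aff x y) = Aff x4 (m' * x4 + (y - m' * x))"
    by (rule sharp_eqI[OF ns])
  moreover have "(m * x3 + (y - m * x))^2 = cubic_rhs a b x3"
    using on_curve_if_collinear_triple line B by fastforce
  ultimately show ?thesis
    using identities by (simp add: B conj_pt_Aff[OF ns])
qed

lemma sharp_self_eq_conj_Aff:
  assumes ns: "nonsingular a b" and P: "y^2 = cubic_rhs a b x" and "x \<noteq> 0"
    and line: "collinear_triple a b (Aff x y) (conj_pt a b (Aff x y)) B"
  shows "sharp a b (Aff x y) (Aff x y) = conj_pt a b B"
proof -
  consider "b = x^2" | "b \<noteq> x^2" "y = 0" | "b \<noteq> x^2" "y \<noteq> 0"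
    by blast
  then show ?thesis
  proof cases
    case 1
    with sharp_self_eq_conj_vertical_chord[OF ns P \<open>x \<noteq> 0\<close>] line show ?thesis
      by simp
  next
    case 2
    with sharp_self_eq_conj_two_torsion[OF ns _ \<open>x \<noteq> 0\<close>] P line show ?thesis
      by simp
  next
    case 3
    with sharp_self_eq_conj_generic[OF ns P \<open>x \<noteq> 0\<close>] line show ?thesis
      by simp
  qed
qed

theorem fact7:
  fixes a b :: real and A B :: point
  assumes "nonsingular a b"
    and "on_curve a b A" and "on_curve a b B"
    and "\<exists>L. \<forall>X. imult a b L X = count {#A, conj_pt a b A, B#} X"
  shows "sharp a b A A = conj_pt a b B"
proof -
  note ns = assms(1)
  have line: "collinear_triple a b A (conj_pt a b A) B"
    using assms(4) unfolding collinear_triple_def .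
  show ?thesis
  proof (cases A)
    case Inf
    with sharp_self_eq_conj_Inf[OF ns] line show ?thesis
      by simp
  next
    case (Aff x y)
    with assms(2) have P: "y^2 = cubic_rhs a b x"
      by simp
    show ?thesis
    proof (cases "x = 0")
      case True
      with Aff P have "A = T_pt"
        by (simp add: T_pt_def cubic_rhs_def)
      with sharp_self_eq_conj_T[OF ns] line show ?thesis
        by simp
    next
      case False
      with sharp_self_eq_conj_Aff[OF ns P] line Aff show ?thesis
        by simp
    qed
  qed
qed

end
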